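(* Let $X$ be a metric space, $\mathcal M=\{M_1,\dots,M_n\}\subset\mathcal P^f_{\mathrm{Cl}}(X)$, $\Sigma(\mathcal M)\ne\emptyset$ and $d\in\Omega(\mathcal M)$. Then every compact $K\in\Sigma_d(\mathcal M)$ contains (as a subset) at least one element of $\Sigma_d(\mathcal M)$ that is minimal with respect to inclusion in $\Sigma_d(\mathcal M)$.
   Context: For a metric space $X$, $p\in X$, $A\subset X$: $|p\,A|=\inf_{a\in A}|p\,a|$ ($=\infty$ if $A=\emptyset$); for $0\le r<\infty$, $B_r(A)=\{p:|p\,A|\le r\}$. For nonempty $A,B$, $d_H(A,B)=\max\{\sup_{a\in A}|a\,B|,\sup_{b\in B}|b\,A|\}\in[0,\infty]$. $\mathcal P_{\mathrm{Cl}}(X)$ is the set of nonempty closed subsets of $X$ with $d_H$. A finiteness class of $\mathcal P_{\mathrm{Cl}}(X)$ is an equivalence class of the relation $A\sim B\iff d_H(A,B)<\infty$; $\mathcal P^f_{\mathrm{Cl}}(X)$ denotes a fixed finiteness class. For finite $\mathcal M=\{M_1,\dots,M_n\}\subset\mathcal P^f_{\mathrm{Cl}}(X)$, set $S_{\mathcal M}(Y)=\sum_{i=1}^n d_H(Y,M_i)$ for $Y\in\mathcal P^f_{\mathrm{Cl}}(X)$; $\Sigma(\mathcal M)$ is the set of all minimizers of $S_{\mathcal M}$ over $\mathcal P^f_{\mathrm{Cl}}(X)$. For $K\in\Sigma(\mathcal M)$, $d(K)=(d_H(K,M_1),\dots,d_H(K,M_n))$; $\Omega(\mathcal M)=\{d(K):K\in\Sigma(\mathcal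 M)\}$; for $d=(d_1,\dots,d_n)\in\Omega(\mathcal M)$, $\Sigma_d(\mathcal M)=\{K\in\Sigma(\mathcal M):d(K)=d\}$, partially ordered by inclusion. *)

theory Defs
  imports "HOL-Analysis.Analysis"
begin

text \<open>Distance from a point to a set, valued in extended reals (infinite for the empty set).\<close>
definition pt_set_dist :: "'a::metric_space \<Rightarrow> 'a set \<Rightarrow> ereal" where
  "pt_set_dist p A = (INF a\<in>A. ereal (dist p a))"

definition hdist :: "'a::metric_space set \<Rightarrow> 'a set \<Rightarrow> ereal" where
  "hdist A B = max (SUP a\<in>A. pt_set_dist a B) (SUP b\<in>B. pt_set_dist b A)"

definition fin_class :: "'a::metric_space set \<Rightarrow> 'a set set" where
  "fin_class A0 = {Y. Y \<noteq> {} \<and> closed Y \<and> hdist Y A0 < \<infinity>}"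

definition S_sum :: "'a::metric_space set set \<Rightarrow> (nat \<Rightarrow> 'a set) \<Rightarrow> nat \<Rightarrow> 'a set \<Rightarrow> ereal" where
  "S_sum C M n Y = (\<Sum>i<n. hdist Y (M i))"

definition Sigma_min :: "'a::metric_space set set \<Rightarrow> (nat \<Rightarrow> 'a set) \<Rightarrow> nat \<Rightarrow> 'a set set" where
  "Sigma_min C M n = {K \<in> C. \<forall>Y\<in>C. S_sum C M n K \<le> S_sum C M n Y}"

definition dvec :: "(nat \<Rightarrow> 'a::metric_space set) \<Rightarrow> nat \<Rightarrow> 'a set \<Rightarrow> nat \<Rightarrow> ereal" where
  "dvec M n K = (\<lambda>i. if i < n then hdist K (M i) else 0)"

definition Omega :: "'a::metric_space set set \<Rightarrow> (nat \<Rightarrow> 'a set) \<Rightarrow> nat \<Rightarrow> (nat \<Rightarrow> ereal) set" where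
  "Omega C M n = dvec M n ` Sigma_min C M n"

definition Sigma_d :: "'a::metric_space set set \<Rightarrow> (nat \<Rightarrow> 'a set) \<Rightarrow> nat \<Rightarrow> (nat \<Rightarrow> ereal) \<Rightarrow> 'a set set" where
  "Sigma_d C M n d = {K \<in> Sigma_min C M n. dvec M n K = d}"

end

theory Submission
  imports Defs
begin

(* Below the compact set K, the members of Sigma_d are exactly the nonempty closed L \<subseteq> K with
  d_H(L, M_i) \<le> d_i for all i: such an L stays in the finiteness class, since
  d_H(L, A0) \<le> d_H(K, A0) + diam K, and as no term of the minimal sum can drop, every distance
  equals d_i. This description survives intersections of chains, because a decreasing family of
  compact sets that all meet the closed ball of radius d_i about a point of M_i has an intersection
  meeting that ball as well. Zorn's lemma for the reverse inclusion then gives a minimal element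
  below K. *)

lemma subset_Zorn_minimal_below:
  assumes chain: "\<And>C. C \<noteq> {} \<Longrightarrow> subset.chain A C \<Longrightarrow> (\<forall>X\<in>C. X \<subseteq> K) \<Longrightarrow> \<Inter>C \<in> A"
    and "K \<in> A"
  shows "\<exists>M\<in>A. M \<subseteq> K \<and> (\<forall>X\<in>A. X \<subseteq> M \<longrightarrow> X = M)"
proof -
  let ?B = "uminus ` {X \<in> A. X \<subseteq> K}"
  have "\<exists>N\<in>?B. \<forall>X\<in>?B. N \<subseteq> X \<longrightarrow> X = N"
  proof (rule subset_Zorn_nonempty)
    show "?B \<noteq> {}" using \<open>K \<in> A\<close> by auto
  next
    fix C assume "C \<noteq> {}" "subset.chain ?B C"
    then have "uminus ` C \<noteq> {}" "subset.chain A (uminus ` C)" "\<forall>X\<in>uminus ` C. X \<subseteq> K"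
      by (auto simp: subset_chain_def)
    then have "\<Inter>(uminus ` C) \<in> A" "\<Inter>(uminus ` C) \<subseteq> K"
      using chain by auto
    then show "\<Union>C \<in> ?B"
      by (auto simp: image_iff uminus_Inf)
  qed
  then obtain M where "M \<in> A" "M \<subseteq> K" and "\<forall>X\<in>A. X \<subseteq> K \<longrightarrow> - M \<subseteq> - X \<longrightarrow> X = M"
    by auto
  then show ?thesis by (metis Compl_subset_Compl_iff order_trans)
qed

lemma sum_ereal_mono_inv:
  fixes f g :: "'i \<Rightarrow> ereal"
  assumes "sum f I = sum g I" "\<And>i. i \<in> I \<Longrightarrow> f i \<le> g i"
    and "\<And>i. i \<in> I \<Longrightarrow> \<bar>f i\<bar> \<noteq> \<infinity>" "\<And>i. i \<in> I \<Longrightarrow> \<bar>g i\<bar> \<noteq> \<infinity>"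
    and "i \<in> I" "finite I"
  shows "f i = g i"
proof -
  have "sum h I = ereal (\<Sum>i\<in>I. real_of_ereal (h i))" if "\<And>i. i \<in> I \<Longrightarrow> \<bar>h i\<bar> \<noteq> \<infinity>" for h
  proof -
    have "ereal (\<Sum>i\<in>I. real_of_ereal (h i)) = (\<Sum>i\<in>I. ereal (real_of_ereal (h i)))"
      by (rule sum_ereal[symmetric])
    also have "\<dots> = sum h I"
      using that by (intro sum.cong) (auto simp: ereal_real')
    finally show ?thesis ..
  qed
  then have "(\<Sum>i\<in>I. real_of_ereal (f i)) = (\<Sum>i\<in>I. real_of_ereal (g i))"
    using assms(1,3,4) by (metis ereal.inject)
  then have "real_of_ereal (f i) = real_of_ereal (g i)"
  proof (rule sum_mono_inv)
    show "real_of_ereal (f j) \<le> real_of_ereal (g j)" if "j \<in> I" for j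
      using assms(2-4)[OF that] by (metis ereal_less_eq(3) ereal_real')
  qed (use assms(5,6) in auto)
  then show ?thesis using assms(3-5) by (metis ereal_real')
qed

lemma compact_chain_Inter_nonempty:
  fixes F :: "'a::t2_space set set"
  assumes "\<And>S. S \<in> F \<Longrightarrow> compact S" "{} \<notin> F" "chain\<^sub>\<subseteq> F"
  shows "\<Inter>F \<noteq> {}"
proof (cases "F = {}")
  case False
  then obtain S0 where "S0 \<in> F" by auto
  have "S0 \<inter> \<Inter>F \<noteq> {}"
  proof (rule compact_imp_fip)
    show "compact S0" "\<And>T. T \<in> F \<Longrightarrow> closed T"
      using assms(1) \<open>S0 \<in> F\<close> by (auto intro: compact_imp_closed)
  next
    fix G assume "finite G" "G \<subseteq> F"
    then have "\<Inter>(insert S0 G) \<in> insert S0 G"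
      using \<open>S0 \<in> F\<close> assms(3) by (intro Inter_in_chain) (auto simp: chain_subset_def subset_chain_def)
    then show "S0 \<inter> \<Inter>G \<noteq> {}"
      using assms(2) \<open>S0 \<in> F\<close> \<open>G \<subseteq> F\<close> by auto
  qed
  then show ?thesis by auto
qed simp

lemma pt_set_dist_eq_infdist: "A \<noteq> {} \<Longrightarrow> pt_set_dist p A = ereal (infdist p A)"
  unfolding pt_set_dist_def infdist_notempty
  by (subst ereal_Inf') (auto simp: image_comp)

lemma hdist_eq_SUP_infdist:
  "A \<noteq> {} \<Longrightarrow> B \<noteq> {} \<Longrightarrow>
    hdist A B = max (SUP a\<in>A. ereal (infdist a B)) (SUP b\<in>B. ereal (infdist b A))"
  unfolding hdist_def by (simp add: pt_set_dist_eq_infdist)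

lemma hdist_le_ereal_iff:
  "A \<noteq> {} \<Longrightarrow> B \<noteq> {} \<Longrightarrow>
    hdist A B \<le> ereal r \<longleftrightarrow> (\<forall>a\<in>A. infdist a B \<le> r) \<and> (\<forall>b\<in>B. infdist b A \<le> r)"
  by (simp add: hdist_eq_SUP_infdist SUP_le_iff)

lemma hdist_nonneg:
  assumes "A \<noteq> {}" "B \<noteq> {}"
  shows "0 \<le> hdist A B"
proof -
  obtain a where "a \<in> A" using assms by auto
  then have "ereal 0 \<le> (SUP a\<in>A. ereal (infdist a B))"
    by (intro SUP_upper2) (auto simp: infdist_nonneg)
  then show ?thesis by (simp add: hdist_eq_SUP_infdist assms le_max_iff_disj zero_ereal_def)
qed

lemma hdist_commute: "hdist A B = hdist B A"
  unfolding hdist_def by (simp add: max.commute)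

lemma hdist_self: "A \<noteq> {} \<Longrightarrow> hdist A A = 0"
  by (simp add: hdist_eq_SUP_infdist)

lemma infdist_attains_inf_compact:
  assumes "compact X" "X \<noteq> {}"
  obtains x where "x \<in> X" "infdist b X = dist b x"
proof -
  obtain x where x: "x \<in> X" "\<forall>y\<in>X. dist b x \<le> dist b y"
    using continuous_attains_inf[OF assms continuous_on_dist[OF continuous_on_const continuous_on_id]]
    by auto
  have "infdist b X = dist b x"
    using x assms by (intro antisym infdist_le) (auto simp: infdist_notempty intro!: cINF_greatest)
  with x that show ?thesis by blast
qed

lemma infdist_subset_le_diameter:
  assumes "L \<subseteq> K" "L \<noteq> {}" "bounded K"
  shows "infdist b L \<le> infdist b K + diameter K"
proof -
  obtain x where x: "x \<in> L" using assms by auto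
  have "K \<noteq> {}" using assms by auto
  have "infdist b L - diameter K \<le> infdist b K"
    unfolding infdist_notempty[OF \<open>K \<noteq> {}\<close>]
  proof (rule cINF_greatest)
    fix k assume "k \<in> K"
    have "infdist b L \<le> dist b k + dist k x"
      using infdist_le[OF x, of b] dist_triangle[of b x k] by linarith
    moreover have "dist k x \<le> diameter K"
      using diameter_bounded_bound[OF assms(3) \<open>k \<in> K\<close>] x assms(1) by auto
    ultimately show "infdist b L - diameter K \<le> dist b k" by simp
  qed (use assms in auto)
  then show ?thesis by simp
qed

lemma hdist_subset_le_diameter:
  assumes "L \<subseteq> K" "L \<noteq> {}" "bounded K" "A \<noteq> {}"
  shows "hdist L A \<le> hdist K A + ereal (diameter K)"
proof (cases "hdist K A")
  case (real c)
  have "K \<noteq> {}" using assms by auto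
  then have "\<forall>a\<in>K. infdist a A \<le> c" "\<forall>b\<in>A. infdist b K \<le> c"
    using hdist_le_ereal_iff[OF _ assms(4), of K c] real by auto
  moreover note infdist_subset_le_diameter[OF assms(1-3)] diameter_ge_0[OF assms(3)]
  ultimately have "\<forall>a\<in>L. infdist a A \<le> c + diameter K" "\<forall>b\<in>A. infdist b L \<le> c + diameter K"
    using assms(1) by (fastforce, smt (verit))
  then have "hdist L A \<le> ereal (c + diameter K)"
    using hdist_le_ereal_iff[OF assms(2,4)] by blast
  with real show ?thesis by simp
next
  case MInf
  then show ?thesis using hdist_nonneg[OF _ assms(4), of K] assms(1,2) by auto
qed simp

lemma hdist_Inter_chain_le:
  fixes F :: "'a::metric_space set set"
  assumes "F \<noteq> {}" "\<And>S. S \<in> F \<Longrightarrow> compact S" "{} \<notin> F" "chain\<^sub>\<subseteq> F" "B \<noteq> {}"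
    and "\<And>S. S \<in> F \<Longrightarrow> hdist S B \<le> ereal r"
  shows "hdist (\<Inter>F) B \<le> ereal r"
proof -
  have ne: "\<Inter>F \<noteq> {}"
    using assms(2-4) by (rule compact_chain_Inter_nonempty)
  have near: "(\<forall>a\<in>S. infdist a B \<le> r) \<and> (\<forall>b\<in>B. infdist b S \<le> r)" if "S \<in> F" for S
    using hdist_le_ereal_iff[of S B r] assms(3,5,6) that by auto
  show ?thesis
    unfolding hdist_le_ereal_iff[OF ne assms(5)]
  proof safe
    fix a assume "a \<in> \<Inter>F"
    then show "infdist a B \<le> r" using near assms(1) by auto
  next
    fix b assume "b \<in> B"
    have "S \<inter> cball b r \<noteq> {}" if "S \<in> F" for S
    proof -
      have "compact S" "S \<noteq> {}" using assms(2,3) that by auto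
      then obtain x where "x \<in> S" "infdist b S = dist b x"
        by (rule infdist_attains_inf_compact)
      then show ?thesis using near that \<open>b \<in> B\<close> by fastforce
    qed
    moreover have "chain\<^sub>\<subseteq> ((\<lambda>S. S \<inter> cball b r) ` F)"
      using assms(4) unfolding chain_subset_def by simp blast
    ultimately have "\<Inter>((\<lambda>S. S \<inter> cball b r) ` F) \<noteq> {}"
      using assms(2) by (intro compact_chain_Inter_nonempty) (auto simp: compact_Int_closed)
    then obtain y where "y \<in> \<Inter>F" "dist b y \<le> r"
      using assms(1) by auto
    then show "infdist b (\<Inter>F) \<le> r" by (rule infdist_le2)
  qed
qed

lemma self_in_fin_class: "A0 \<noteq> {} \<Longrightarrow> closed A0 \<Longrightarrow> A0 \<in> fin_class A0"
  by (simp add: fin_class_def hdist_self)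

lemma fin_class_closed_subset:
  assumes "K \<in> fin_class A0" "bounded K" "L \<subseteq> K" "L \<noteq> {}" "closed L" "A0 \<noteq> {}"
  shows "L \<in> fin_class A0"
proof -
  have "hdist L A0 \<le> hdist K A0 + ereal (diameter K)"
    using assms(3,4,2,6) by (rule hdist_subset_le_diameter)
  also have "\<dots> < \<infinity>"
    using assms(1) by (simp add: fin_class_def)
  finally show ?thesis
    using assms(4,5) by (simp add: fin_class_def)
qed

lemma Sigma_min_hdist_finite:
  assumes "A0 \<noteq> {}" "closed A0" "\<forall>i<n. M i \<in> fin_class A0"
    and "K \<in> Sigma_min (fin_class A0) M n" "i < n"
  shows "hdist K (M i) < \<infinity>"
proof -
  have "S_sum (fin_class A0) M n A0 \<noteq> \<infinity>"
    using assms(3) by (auto simp: S_sum_def sum_Pinfty fin_class_def hdist_commute)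
  moreover have "S_sum (fin_class A0) M n K \<le> S_sum (fin_class A0) M n A0"
    using assms(4) self_in_fin_class[OF assms(1,2)] by (simp add: Sigma_min_def)
  ultimately have "S_sum (fin_class A0) M n K \<noteq> \<infinity>"
    by auto
  then show ?thesis
    using assms(5) by (auto simp: S_sum_def sum_Pinfty less_top)
qed

lemma Sigma_d_closed_subset:
  assumes "A0 \<noteq> {}" "closed A0" "\<forall>i<n. M i \<in> fin_class A0"
    and K: "K \<in> Sigma_d (fin_class A0) M n d" "bounded K"
    and L: "L \<subseteq> K" "L \<noteq> {}" "closed L"
    and closer: "\<forall>i<n. hdist L (M i) \<le> hdist K (M i)"
  shows "L \<in> Sigma_d (fin_class A0) M n d"
proof -
  let ?C = "fin_class A0"
  let ?S = "S_sum ?C M n"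
  have KC: "K \<in> ?C" and Kmin: "\<forall>Y\<in>?C. ?S K \<le> ?S Y" and dK: "dvec M n K = d"
    using K(1) by (auto simp: Sigma_d_def Sigma_min_def)
  have LC: "L \<in> ?C"
    using fin_class_closed_subset[OF KC K(2) L assms(1)] .
  have "?S L \<le> ?S K"
    using closer by (auto simp: S_sum_def intro: sum_mono)
  with Kmin LC have SLK: "?S L = ?S K"
    by (auto intro: antisym)
  have "hdist L (M i) = hdist K (M i)" if "i < n" for i
  proof (rule sum_ereal_mono_inv[where I = "{..<n}"])
    fix j assume j: "j \<in> {..<n}"
    have "M j \<noteq> {}" "K \<noteq> {}" using assms(3) KC j by (auto simp: fin_class_def)
    moreover have "hdist K (M j) < \<infinity>"
      using Sigma_min_hdist_finite[OF assms(1-3)] K(1) j by (auto simp: Sigma_d_def)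
    moreover have "hdist L (M j) \<le> hdist K (M j)"
      using closer j by simp
    ultimately show "\<bar>hdist L (M j)\<bar> \<noteq> \<infinity>" "\<bar>hdist K (M j)\<bar> \<noteq> \<infinity>"
      using hdist_nonneg[of L "M j"] hdist_nonneg[of K "M j"] L(2) by (auto simp: abs_ereal_ge0)
  qed (use SLK closer that in \<open>auto simp: S_sum_def\<close>)
  then have "dvec M n L = d"
    using dK by (auto simp: dvec_def)
  with LC SLK Kmin show ?thesis
    by (simp add: Sigma_d_def Sigma_min_def)
qed

lemma Sigma_d_Inter_chain:
  assumes "A0 \<noteq> {}" "closed A0" "\<forall>i<n. M i \<in> fin_class A0"
    and K: "K \<in> Sigma_d (fin_class A0) M n d" "compact K"
    and F: "F \<noteq> {}" "F \<subseteq> Sigma_d (fin_class A0) M n d" "chain\<^sub>\<subseteq> F" "\<forall>L\<in>F. L \<subseteq> K"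
  shows "\<Inter>F \<in> Sigma_d (fin_class A0) M n d"
proof -
  have members: "L \<noteq> {} \<and> compact L \<and> (\<forall>i<n. hdist L (M i) = hdist K (M i))" if "L \<in> F" for L
  proof -
    have "L \<noteq> {}" "closed L" "L \<subseteq> K" and dLK: "dvec M n L = dvec M n K"
      using that F K(1) by (auto simp: Sigma_d_def Sigma_min_def fin_class_def)
    moreover have "compact L"
      using compact_Int_closed[OF K(2) \<open>closed L\<close>] \<open>L \<subseteq> K\<close> by (simp add: Int_absorb1)
    moreover have "hdist L (M i) = hdist K (M i)" if "i < n" for i
      using fun_cong[OF dLK, of i] that by (simp add: dvec_def)
    ultimately show ?thesis
      by blast
  qed
  have ne: "\<Inter>F \<noteq> {}"
    using members F(3) by (intro compact_chain_Inter_nonempty) auto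
  have "hdist (\<Inter>F) (M i) \<le> hdist K (M i)" if "i < n" for i
  proof -
    have "M i \<noteq> {}" "K \<noteq> {}"
      using assms(3) K(1) that by (auto simp: fin_class_def Sigma_d_def Sigma_min_def)
    moreover have "hdist K (M i) < \<infinity>"
      using Sigma_min_hdist_finite[OF assms(1-3)] K(1) that by (auto simp: Sigma_d_def)
    ultimately obtain r where r: "hdist K (M i) = ereal r"
      using hdist_nonneg[of K "M i"] by (cases "hdist K (M i)") auto
    have "hdist (\<Inter>F) (M i) \<le> ereal r"
      using F(1,3) members \<open>M i \<noteq> {}\<close> that r by (intro hdist_Inter_chain_le) auto
    with r show ?thesis by simp
  qed
  moreover have "closed (\<Inter>F)"
    using members by (simp add: closed_Inter compact_imp_closed)
  moreover have "\<Inter>F \<subseteq> K"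
    using F(1,4) by auto
  ultimately show ?thesis
    using Sigma_d_closed_subset[OF assms(1-3) K(1) compact_imp_bounded[OF K(2)]] ne by blast
qed

theorem mainTheorem12:
  fixes A0 :: "'a::metric_space set" and M :: "nat \<Rightarrow> 'a set" and n :: nat
    and d :: "nat \<Rightarrow> ereal" and K :: "'a set"
  assumes "A0 \<noteq> {}" and "closed A0"
    and "\<forall>i<n. M i \<in> fin_class A0"
    and "inj_on M {..<n}"
    and "Sigma_min (fin_class A0) M n \<noteq> {}"
    and "d \<in> Omega (fin_class A0) M n"
    and "compact K" and "K \<in> Sigma_d (fin_class A0) M n d"
  shows "\<exists>K'\<in>Sigma_d (fin_class A0) M n d. K' \<subseteq> K \<and>
           (\<forall>K''\<in>Sigma_d (fin_class A0) M n d. K'' \<subseteq> K' \<longrightarrow> K'' = K')"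
proof (rule subset_Zorn_minimal_below)
  fix C assume "C \<noteq> {}" "subset.chain (Sigma_d (fin_class A0) M n d) C" "\<forall>X\<in>C. X \<subseteq> K"
  then show "\<Inter>C \<in> Sigma_d (fin_class A0) M n d"
    using Sigma_d_Inter_chain[OF assms(1-3,8,7)] by (simp add: subset_chain_def chain_subset_def)
qed (fact assms(8))

end
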